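(* In the multi-user imperfect-prediction setting below, let $\phi_I^*=\min_{\lambda\ge0}g_I(\lambda)$ and $\phi_0^*=\min_{\lambda\ge0}g_0(\lambda)$, let $\lambda_0^*$ be a minimizer of $g_0^l$ and $\lambda_I^*$ a minimizer of $g_I^l$ over $\lambda\ge0$. Then $$g_I^l(\lambda_I^* )-g_0^u(\lambda_I^* )\le\phi_I^*-\phi_0^*\le g_I^u(\lambda_0^* )-g_0^l(\lambda_0^* ).$$
   Context: $N$ users; $B>0$; $a_{\max}>0$. User $n$ has arrival rate $a_n\ge0$, true-positive rate $p_n$ and false-negative rate $q_n$ with $0\le q_n<p_n\le1$ and $q_n\le a_n/a_{\max}\le p_n$, $\tilde a_n=\frac{a_n-a_{\max}q_n}{p_n-q_n}$, a probability vector $\boldsymbol\eta_n$ on its channel states, $\beta_n\ge0$, integers $\tau_n\ge1$, $D_n\ge1$, a Markov channel on $\{1,\dots,K_n\}$ with transition matrix $(P_n^{i,j})$, a finite $\mathcal E\subset[0,\infty)$ containing $0$ and a positive element, and $\zeta_n(i,\cdot):\mathcal E\to[0,1]$ with $\zeta_n(i,0)=0$, $\zeta_n(i,e)>0$ for $e>0$, strictly increasing; states totally ordered by $\zeta_n$ (for all $i,j$ either $\zeta_n(i,e)\ge\zeta_n(j,e)\ \forall e$ or $\le\ \forall e$) with extremal states $i_n^{\max},i_n^{\min}$. For $\lambda\ge0$ (all functions depend on $\lambda$; maxima over $e\in\mathcal E$): $V_n^l(0)=0$, $V_n^l(\tau)=\max_{e>0}\frac{1-[1-\zeta_n(i_n^{\min},e)]^{\tau}}{\zeta_n(i_n^{\min},e)}[-\lambda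 e+\zeta_n(i_n^{\min},e)\beta_n]$; $V_n^u(0)=0$, $V_n^u(\tau)=\sum_{z=1}^{\tau}\max_{e}\{-\lambda e+\zeta_n(i_n^{\max},e)(\beta_n-\max\{0,V_n^l(z-1)\})\}$; for $\tau_n\le\tau\le\tau_n+D_n$, $\tilde V_n^l(\tau)=\max_{e>0}\{-(1-p_n)\frac{1-[1-\zeta_n(i_n^{\min},e)]^{\tau-\tau_n}}{\zeta_n(i_n^{\min},e)}\lambda e+p_n\frac{1-[1-\zeta_n(i_n^{\min},e)]^{\tau}}{\zeta_n(i_n^{\min},e)}[-\lambda e+\zeta_n(i_n^{\min},e)\beta_n]\}$ and $\tilde V_n^u(\tau)=\sum_{z=\tau_n+1}^{\tau}\max_e\{-\lambda e+\zeta_n(i_n^{\max},e)(p_n\beta_n-\max\{0,\tilde V_n^l(\tau_n),\tilde V_n^l(z-1)\})\}+p_n\sum_{z=1}^{\tau_n}\max_e\{-\lambda e+\zeta_n(i_n^{\max},e)(\beta_n-\max\{0,V_n^l(z-1)\})\}$. The imperfect-prediction value function: $V_n^I(0,0,i)=0$; $V_n^I(0,\tau,i)=\max_e\{-\lambda e+\zeta_n(i,e)\beta_n+(1-\zeta_n(i,e))\sum_jP_n^{i,j}V_n^I(0,\tau-1,j)\}$ for $1\le\tau\le\tau_n$; $V_n^I(0,\tau_n+1,i)=\max_e\{-\lambda e+\zeta_n(i,e)p_n\beta_n+p_n(1-\zeta_n(i,e))\sum_jP_n^{i,j}V_n^I(0,\tau_n,j)\}$; $V_n^I(0,\tau,i)=\max_e\{-\lambda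 e+\zeta_n(i,e)p_n\beta_n+(1-\zeta_n(i,e))\sum_jP_n^{i,j}V_n^I(0,\tau-1,j)\}$ for $\tau_n+2\le\tau\le\tau_n+D_n$. Define $g_I(\lambda)=\lambda B+\sum_n[\tilde a_n\sum_i\eta_n^iV_n^I(0,\tau_n+D_n,i)+(a_{\max}-\tilde a_n)q_n\sum_i\eta_n^iV_n^I(0,\tau_n,i)]$, $g_I^u(\lambda)=\lambda B+\sum_n\{\tilde a_n\min[p_n\beta_n,\tilde V_n^u(\tau_n+D_n)]+(a_{\max}-\tilde a_n)q_n\min[\beta_n,V_n^u(\tau_n)]\}$, $g_I^l(\lambda)=\lambda B+\sum_n\{\tilde a_n\max[0,\tilde V_n^l(\tau_n),\tilde V_n^l(\tau_n+D_n)]+(a_{\max}-\tilde a_n)q_n\max[0,V_n^l(\tau_n)]\}$. No-prediction functions: $g_0(\lambda)=\lambda B+\sum_n a_n\sum_i\eta_n^iV_n^I(0,\tau_n,i)$, $g_0^u(\lambda)=\lambda B+\sum_n a_n\min\{\beta_n,V_n^u(\tau_n)\}$, $g_0^l(\lambda)=\lambda B+\sum_n a_n\max\{0,V_n^l(\tau_n)\}$. $g_I$, $g_0$ are the Lagrange dual functions with imperfect prediction and without prediction; $\phi_I^*,\phi_0^*$ the optimal weighted timely-throughputs. *)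

theory Defs
  imports Complex_Main
begin

text \<open>Parameters of the multi-user system. Users are indexed by n < num_users;
  channel states of user n are 1..nstates n.\<close>

record system =
  num_users :: nat
  budget :: real
  a_max :: real
  arrival :: "nat \<Rightarrow> real"
  p_tp :: "nat \<Rightarrow> real"
  q_fn :: "nat \<Rightarrow> real"
  eta :: "nat \<Rightarrow> nat \<Rightarrow> real"
  beta :: "nat \<Rightarrow> real"
  tau :: "nat \<Rightarrow> nat"
  delay :: "nat \<Rightarrow> nat"
  nstates :: "nat \<Rightarrow> nat"
  trans :: "nat \<Rightarrow> nat \<Rightarrow> nat \<Rightarrow> real"
  energies :: "real set"
  zeta :: "nat \<Rightarrow> nat \<Rightarrow> real \<Rightarrow> real"
  i_max :: "nat \<Rightarrow> nat"
  i_min :: "nat \<Rightarrow> nat"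

definition valid_system :: "system \<Rightarrow> bool" where
  "valid_system S \<longleftrightarrow>
     budget S > 0 \<and> a_max S > 0 \<and>
     finite (energies S) \<and> energies S \<subseteq> {0..} \<and> 0 \<in> energies S \<and>
     (\<exists>e\<in>energies S. e > 0) \<and>
     (\<forall>n < num_users S.
        arrival S n \<ge> 0 \<and>
        0 \<le> q_fn S n \<and> q_fn S n < p_tp S n \<and> p_tp S n \<le> 1 \<and>
        q_fn S n \<le> arrival S n / a_max S \<and> arrival S n / a_max S \<le> p_tp S n \<and>
        beta S n \<ge> 0 \<and> tau S n \<ge> 1 \<and> delay S n \<ge> 1 \<and> nstates S n \<ge> 1 \<and>
        (\<forall>i\<in>{1..nstates S n}. eta S n i \<ge> 0) \<and>
        (\<Sum>i\<in>{1..nstates S n}. eta S n i) = 1 \<and>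
        (\<forall>i\<in>{1..nstates S n}. \<forall>j\<in>{1..nstates S n}. trans S n i j \<ge> 0) \<and>
        (\<forall>i\<in>{1..nstates S n}. (\<Sum>j\<in>{1..nstates S n}. trans S n i j) = 1) \<and>
        (\<forall>i\<in>{1..nstates S n}.
           zeta S n i 0 = 0 \<and>
           (\<forall>e\<in>energies S. 0 \<le> zeta S n i e \<and> zeta S n i e \<le> 1) \<and>
           (\<forall>e\<in>energies S. e > 0 \<longrightarrow> zeta S n i e > 0) \<and>
           (\<forall>e\<in>energies S. \<forall>e'\<in>energies S. e < e' \<longrightarrow> zeta S n i e < zeta S n i e')) \<and>
        (\<forall>i\<in>{1..nstates S n}. \<forall>j\<in>{1..nstates S n}.
           (\<forall>e\<in>energies S. zeta S n i e \<ge> zeta S n j e) \<or>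
           (\<forall>e\<in>energies S. zeta S n i e \<le> zeta S n j e)) \<and>
        i_max S n \<in> {1..nstates S n} \<and> i_min S n \<in> {1..nstates S n} \<and>
        (\<forall>j\<in>{1..nstates S n}. \<forall>e\<in>energies S.
           zeta S n (i_min S n) e \<le> zeta S n j e \<and> zeta S n j e \<le> zeta S n (i_max S n) e))"

definition a_tilde :: "system \<Rightarrow> nat \<Rightarrow> real" where
  "a_tilde S n = (arrival S n - a_max S * q_fn S n) / (p_tp S n - q_fn S n)"

definition Vl :: "system \<Rightarrow> nat \<Rightarrow> real \<Rightarrow> nat \<Rightarrow> real" where
  "Vl S n lam t = (if t = 0 then 0 else
     Max ((\<lambda>e. let z = zeta S n (i_min S n) e in
             (1 - (1 - z) ^ t) / z * (- lam * e + z * beta S n))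
          ` {e\<in>energies S. e > 0}))"

definition Vu :: "system \<Rightarrow> nat \<Rightarrow> real \<Rightarrow> nat \<Rightarrow> real" where
  "Vu S n lam t = (\<Sum>z\<in>{1..t}.
     Max ((\<lambda>e. - lam * e + zeta S n (i_max S n) e *
             (beta S n - max 0 (Vl S n lam (z - 1)))) ` energies S))"

text \<open>tilde V^l_n(tau), meaningful for tau_n <= tau <= tau_n + D_n.\<close>
definition tVl :: "system \<Rightarrow> nat \<Rightarrow> real \<Rightarrow> nat \<Rightarrow> real" where
  "tVl S n lam t =
     Max ((\<lambda>e. let z = zeta S n (i_min S n) e in
             - (1 - p_tp S n) * ((1 - (1 - z) ^ (t - tau S n)) / z) * lam * e
             + p_tp S n * ((1 - (1 - z) ^ t) / z) * (- lam * e + z * beta S n))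
          ` {e\<in>energies S. e > 0})"

definition tVu :: "system \<Rightarrow> nat \<Rightarrow> real \<Rightarrow> nat \<Rightarrow> real" where
  "tVu S n lam t =
     (\<Sum>z\<in>{tau S n + 1..t}.
        Max ((\<lambda>e. - lam * e + zeta S n (i_max S n) e *
                (p_tp S n * beta S n -
                 max 0 (max (tVl S n lam (tau S n)) (tVl S n lam (z - 1))))) ` energies S))
     + p_tp S n * (\<Sum>z\<in>{1..tau S n}.
        Max ((\<lambda>e. - lam * e + zeta S n (i_max S n) e *
                (beta S n - max 0 (Vl S n lam (z - 1)))) ` energies S))"

text \<open>Imperfect-prediction value function V^I_n(0, tau, i). For tau > tau_n + D_n
  (never used) the last recursion is simply continued.\<close>
fun VI :: "system \<Rightarrow> nat \<Rightarrow> real \<Rightarrow> nat \<Rightarrow> nat \<Rightarrow> real" where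
  "VI S n lam 0 i = 0"
| "VI S n lam (Suc t) i =
     (let Sm = (\<Sum>j\<in>{1..nstates S n}. trans S n i j * VI S n lam t j) in
      Max ((\<lambda>e. let z = zeta S n i e in
        - lam * e +
        (if Suc t \<le> tau S n then z * beta S n + (1 - z) * Sm
         else if Suc t = tau S n + 1 then z * p_tp S n * beta S n + p_tp S n * (1 - z) * Sm
         else z * p_tp S n * beta S n + (1 - z) * Sm)) ` energies S))"

definition gI :: "system \<Rightarrow> real \<Rightarrow> real" where
  "gI S lam = lam * budget S + (\<Sum>n<num_users S.
     a_tilde S n * (\<Sum>i\<in>{1..nstates S n}. eta S n i * VI S n lam (tau S n + delay S n) i)
     + (a_max S - a_tilde S n) * q_fn S n *
       (\<Sum>i\<in>{1..nstates S n}. eta S n i * VI S n lam (tau S n) i))"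

definition gI_u :: "system \<Rightarrow> real \<Rightarrow> real" where
  "gI_u S lam = lam * budget S + (\<Sum>n<num_users S.
     a_tilde S n * min (p_tp S n * beta S n) (tVu S n lam (tau S n + delay S n))
     + (a_max S - a_tilde S n) * q_fn S n * min (beta S n) (Vu S n lam (tau S n)))"

definition gI_l :: "system \<Rightarrow> real \<Rightarrow> real" where
  "gI_l S lam = lam * budget S + (\<Sum>n<num_users S.
     a_tilde S n * max 0 (max (tVl S n lam (tau S n)) (tVl S n lam (tau S n + delay S n)))
     + (a_max S - a_tilde S n) * q_fn S n * max 0 (Vl S n lam (tau S n)))"

definition g0 :: "system \<Rightarrow> real \<Rightarrow> real" where
  "g0 S lam = lam * budget S + (\<Sum>n<num_users S.
     arrival S n * (\<Sum>i\<in>{1..nstates S n}. eta S n i * VI S n lam (tau S n) i))"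

definition g0_u :: "system \<Rightarrow> real \<Rightarrow> real" where
  "g0_u S lam = lam * budget S + (\<Sum>n<num_users S.
     arrival S n * min (beta S n) (Vu S n lam (tau S n)))"

definition g0_l :: "system \<Rightarrow> real \<Rightarrow> real" where
  "g0_l S lam = lam * budget S + (\<Sum>n<num_users S.
     arrival S n * max 0 (Vl S n lam (tau S n)))"

end

theory Submission
  imports Defs
begin

text \<open>For every price \<open>\<lambda> \<ge> 0\<close> the dual functions are sandwiched, \<open>g\<^sup>l \<le> g \<le> g\<^sup>u\<close>, with
  and without prediction; evaluating these sandwiches at the minimisers gives the bounds on
  \<open>\<phi>\<^sub>I\<^sup>* - \<phi>\<^sub>0\<^sup>*\<close>. Spending a fixed energy in every slot is a feasible policy, and its value in
  the worst channel state has a closed form whose maximum over energies is \<open>V\<^sup>l\<close> or \<open>\<tilde>V\<^sup>l\<close>. The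
  upper bounds come from the cap \<open>\<beta>\<close> (\<open>p\<beta>\<close> past the deadline) on the value, and from replacing
  the success probability by that of the best state while bounding the continuation value
  inside the Bellman step from below by the lower bound.\<close>

lemma Max_image_leI:
  fixes f :: "'a \<Rightarrow> 'b::linorder"
  assumes "finite A" "A \<noteq> {}" "\<And>x. x \<in> A \<Longrightarrow> f x \<le> c"
  shows "Max (f ` A) \<le> c"
  using assms by (intro Max.boundedI) auto

lemma le_Max_imageI:
  fixes f :: "'a \<Rightarrow> 'b::linorder"
  assumes "finite A" "x \<in> A" "c \<le> f x"
  shows "c \<le> Max (f ` A)"
  using assms by (meson Max_ge finite_imageI imageI order_trans)

lemma Max_image_le_Max_image_add:
  fixes f g :: "'a \<Rightarrow> real"
  assumes "finite A" "A \<noteq> {}" "\<And>x. x \<in> A \<Longrightarrow> f x \<le> g x + c"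
  shows "Max (f ` A) \<le> Max (g ` A) + c"
proof (rule Max_image_leI[OF assms(1,2)])
  fix x assume "x \<in> A"
  then have "g x \<le> Max (g ` A)" using assms(1) by (intro le_Max_imageI) auto
  then show "f x \<le> Max (g ` A) + c" using assms(3)[OF \<open>x \<in> A\<close>] by linarith
qed

lemma convex_combination_ge:
  fixes x w :: "'a \<Rightarrow> real"
  assumes "finite A" "\<And>j. j \<in> A \<Longrightarrow> 0 \<le> w j" "sum w A = 1" "\<And>j. j \<in> A \<Longrightarrow> c \<le> x j"
  shows "c \<le> (\<Sum>j\<in>A. w j * x j)"
proof -
  have "c = (\<Sum>j\<in>A. w j * c)" using assms(3) by (simp add: sum_distrib_right[symmetric])
  also have "\<dots> \<le> (\<Sum>j\<in>A. w j * x j)" using assms by (intro sum_mono mult_left_mono) auto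
  finally show ?thesis .
qed

lemma convex_combination_le:
  fixes x w :: "'a \<Rightarrow> real"
  assumes "finite A" "\<And>j. j \<in> A \<Longrightarrow> 0 \<le> w j" "sum w A = 1" "\<And>j. j \<in> A \<Longrightarrow> x j \<le> c"
  shows "(\<Sum>j\<in>A. w j * x j) \<le> c"
proof -
  have "(\<Sum>j\<in>A. w j * x j) \<le> (\<Sum>j\<in>A. w j * c)" using assms by (intro sum_mono mult_left_mono) auto
  also have "\<dots> = c" using assms(3) by (simp add: sum_distrib_right[symmetric])
  finally show ?thesis .
qed

lemma minimum_difference_bounds:
  fixes f f_l f_u g g_l g_u :: "'a \<Rightarrow> real"
  assumes f_bounds: "\<And>x. x \<in> A \<Longrightarrow> f_l x \<le> f x \<and> f x \<le> f_u x"
    and g_bounds: "\<And>x. x \<in> A \<Longrightarrow> g_l x \<le> g x \<and> g x \<le> g_u x"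
    and f_min: "\<exists>x\<in>A. f x = \<phi>" "\<forall>x\<in>A. \<phi> \<le> f x"
    and g_min: "\<exists>x\<in>A. g x = \<psi>" "\<forall>x\<in>A. \<psi> \<le> g x"
    and x_g: "x\<^sub>g \<in> A" "\<forall>x\<in>A. g_l x\<^sub>g \<le> g_l x"
    and x_f: "x\<^sub>f \<in> A" "\<forall>x\<in>A. f_l x\<^sub>f \<le> f_l x"
  shows "f_l x\<^sub>f - g_u x\<^sub>f \<le> \<phi> - \<psi> \<and> \<phi> - \<psi> \<le> f_u x\<^sub>g - g_l x\<^sub>g"
proof -
  obtain a where a: "a \<in> A" "f a = \<phi>" using f_min(1) by blast
  obtain b where b: "b \<in> A" "g b = \<psi>" using g_min(1) by blast
  have "f_l x\<^sub>f \<le> \<phi>" using x_f(2) a f_bounds[of a] by force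
  moreover have "\<psi> \<le> g_u x\<^sub>f" using g_min(2) x_f(1) g_bounds[of x\<^sub>f] by force
  moreover have "\<phi> \<le> f_u x\<^sub>g" using f_min(2) x_g(1) f_bounds[of x\<^sub>g] by force
  moreover have "g_l x\<^sub>g \<le> \<psi>" using x_g(2) b g_bounds[of b] by force
  ultimately show ?thesis by linarith
qed

definition reward_cap :: "system \<Rightarrow> nat \<Rightarrow> nat \<Rightarrow> real" where
  "reward_cap S n t = (if t \<le> tau S n then beta S n else p_tp S n * beta S n)"

definition carry_weight :: "system \<Rightarrow> nat \<Rightarrow> nat \<Rightarrow> real" where
  "carry_weight S n t = (if t = Suc (tau S n) then p_tp S n else 1)"

text \<open>The three cases of the recursion for \<open>V\<^sup>I\<close> in one formula: a success earns
  \<open>reward_cap\<close>, the continuation value is scaled by \<open>carry_weight\<close>, which is \<open>p\<close> exactly in the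
  first slot past the deadline.\<close>

definition bellman :: "system \<Rightarrow> nat \<Rightarrow> real \<Rightarrow> real \<Rightarrow> real \<Rightarrow> nat \<Rightarrow> real \<Rightarrow> real" where
  "bellman S n lam e z t W =
     - lam * e + z * (reward_cap S n t - carry_weight S n t * W) + carry_weight S n t * W"

lemma bellman_before_deadline:
  "t \<le> tau S n \<Longrightarrow> bellman S n lam e z t W = - lam * e + z * beta S n + (1 - z) * W"
  by (simp add: bellman_def reward_cap_def carry_weight_def algebra_simps)

lemma bellman_first_after_deadline:
  "bellman S n lam e z (Suc (tau S n)) W =
     - lam * e + z * p_tp S n * beta S n + p_tp S n * (1 - z) * W"
  by (simp add: bellman_def reward_cap_def carry_weight_def algebra_simps)

lemma bellman_later_after_deadline:
  "Suc (tau S n) < t \<Longrightarrow>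
     bellman S n lam e z t W = - lam * e + z * p_tp S n * beta S n + (1 - z) * W"
  by (simp add: bellman_def reward_cap_def carry_weight_def algebra_simps)

lemma VI_Suc_bellman:
  "VI S n lam (Suc t) i = Max ((\<lambda>e. bellman S n lam e (zeta S n i e) (Suc t)
     (\<Sum>j\<in>{1..nstates S n}. trans S n i j * VI S n lam t j)) ` energies S)"
  by (auto simp: bellman_def reward_cap_def carry_weight_def Let_def algebra_simps
      intro!: arg_cong[where f = Max] image_cong)

declare VI.simps(2) [simp del]

lemma bellman_mono_success:
  assumes "z \<le> z'" "carry_weight S n t * W \<le> reward_cap S n t"
  shows "bellman S n lam e z t W \<le> bellman S n lam e z' t W"
  using assms mult_right_mono[of z z' "reward_cap S n t - carry_weight S n t * W"]
  by (simp add: bellman_def)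

lemma bellman_le_optimistic:
  fixes M :: real
  assumes "0 \<le> z" "z \<le> z'" "M \<le> carry_weight S n t * W" "M \<le> reward_cap S n t"
  shows "bellman S n lam e z t W \<le>
     - lam * e + z' * (reward_cap S n t - M) + carry_weight S n t * W"
proof -
  have "z * (reward_cap S n t - carry_weight S n t * W) \<le> z * (reward_cap S n t - M)"
    using assms by (intro mult_left_mono) auto
  also have "\<dots> \<le> z' * (reward_cap S n t - M)"
    using assms by (intro mult_right_mono) auto
  finally show ?thesis by (simp add: bellman_def)
qed

text \<open>The value of spending energy \<open>e\<close> in every slot when each slot succeeds with probability
  \<open>z\<close>.\<close>

fun stationary_value :: "system \<Rightarrow> nat \<Rightarrow> real \<Rightarrow> real \<Rightarrow> real \<Rightarrow> nat \<Rightarrow> real" where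
  "stationary_value S n lam e z 0 = 0"
| "stationary_value S n lam e z (Suc t) = bellman S n lam e z (Suc t) (stationary_value S n lam e z t)"

lemma stationary_value_before_deadline:
  assumes "z \<noteq> 0" "t \<le> tau S n"
  shows "stationary_value S n lam e z t = (1 - (1 - z) ^ t) / z * (- lam * e + z * beta S n)"
  using assms(2)
proof (induction t)
  case (Suc t)
  then have "stationary_value S n lam e z (Suc t)
      = - lam * e + z * beta S n + (1 - z) * ((1 - (1 - z) ^ t) / z * (- lam * e + z * beta S n))"
    by (simp add: bellman_before_deadline)
  also have "\<dots> = (1 - (1 - z) ^ Suc t) / z * (- lam * e + z * beta S n)"
    using assms(1) by (simp add: field_simps)
  finally show ?case .
qed simp

lemma stationary_value_after_deadline:
  assumes "z \<noteq> 0"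
  shows "stationary_value S n lam e z (tau S n + Suc k) =
     - (1 - p_tp S n) * ((1 - (1 - z) ^ Suc k) / z) * lam * e
     + p_tp S n * ((1 - (1 - z) ^ (tau S n + Suc k)) / z) * (- lam * e + z * beta S n)"
proof (induction k)
  case 0
  have "stationary_value S n lam e z (tau S n) =
      (1 - (1 - z) ^ tau S n) / z * (- lam * e + z * beta S n)"
    using stationary_value_before_deadline[OF assms] by simp
  then have "stationary_value S n lam e z (tau S n + Suc 0) = - lam * e + z * p_tp S n * beta S n
      + p_tp S n * (1 - z) * ((1 - (1 - z) ^ tau S n) / z * (- lam * e + z * beta S n))"
    by (simp add: bellman_first_after_deadline)
  also have "\<dots> = - (1 - p_tp S n) * ((1 - (1 - z) ^ Suc 0) / z) * lam * e
     + p_tp S n * ((1 - (1 - z) ^ (tau S n + Suc 0)) / z) * (- lam * e + z * beta S n)"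
    using assms by (simp add: field_simps)
  finally show ?case .
next
  case (Suc k)
  then have "stationary_value S n lam e z (tau S n + Suc (Suc k)) = - lam * e + z * p_tp S n * beta S n
      + (1 - z) * (- (1 - p_tp S n) * ((1 - (1 - z) ^ Suc k) / z) * lam * e
        + p_tp S n * ((1 - (1 - z) ^ (tau S n + Suc k)) / z) * (- lam * e + z * beta S n))"
    by (simp add: bellman_later_after_deadline)
  also have "\<dots> = - (1 - p_tp S n) * ((1 - (1 - z) ^ Suc (Suc k)) / z) * lam * e
     + p_tp S n * ((1 - (1 - z) ^ (tau S n + Suc (Suc k))) / z) * (- lam * e + z * beta S n)"
    using assms by (simp add: field_simps)
  finally show ?case .
qed

locale user_at_price =
  fixes S :: system and n :: nat and lam :: real
  assumes valid: "valid_system S" and user: "n < num_users S" and price_nonneg: "0 \<le> lam"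
begin

abbreviation states :: "nat set" where
  "states \<equiv> {1..nstates S n}"

abbreviation positive_energies :: "real set" where
  "positive_energies \<equiv> {e \<in> energies S. 0 < e}"

abbreviation expected_next :: "nat \<Rightarrow> nat \<Rightarrow> real" where
  "expected_next i t \<equiv> \<Sum>j\<in>states. trans S n i j * VI S n lam t j"

lemma energies_finite: "finite (energies S)"
  and zero_energy: "0 \<in> energies S"
  and energy_nonneg: "e \<in> energies S \<Longrightarrow> 0 \<le> e"
  and positive_energies_nonempty: "positive_energies \<noteq> {}"
  using valid unfolding valid_system_def by auto

lemma positive_energies_finite: "finite positive_energies"
  using energies_finite by simp

lemma p_tp_nonneg: "0 \<le> p_tp S n"
  and q_fn_nonneg: "0 \<le> q_fn S n"
  and q_fn_less_p_tp: "q_fn S n < p_tp S n"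
  and arrival_nonneg: "0 \<le> arrival S n"
  and arrival_bounds: "a_max S * q_fn S n \<le> arrival S n" "arrival S n \<le> a_max S * p_tp S n"
  and beta_nonneg: "0 \<le> beta S n"
  and delay_pos: "1 \<le> delay S n"
  using valid user unfolding valid_system_def by (auto simp: field_simps)

lemma zeta_bounds: "i \<in> states \<Longrightarrow> e \<in> energies S \<Longrightarrow> 0 \<le> zeta S n i e \<and> zeta S n i e \<le> 1"
  and zeta_zero: "i \<in> states \<Longrightarrow> zeta S n i 0 = 0"
  and zeta_pos: "i \<in> states \<Longrightarrow> e \<in> energies S \<Longrightarrow> 0 < e \<Longrightarrow> 0 < zeta S n i e"
  and zeta_between_extremes: "i \<in> states \<Longrightarrow> e \<in> energies S \<Longrightarrow>
      zeta S n (i_min S n) e \<le> zeta S n i e \<and> zeta S n i e \<le> zeta S n (i_max S n) e"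
  and i_min_state: "i_min S n \<in> states"
  using valid user unfolding valid_system_def by auto

lemma trans_nonneg: "i \<in> states \<Longrightarrow> j \<in> states \<Longrightarrow> 0 \<le> trans S n i j"
  and trans_sum: "i \<in> states \<Longrightarrow> (\<Sum>j\<in>states. trans S n i j) = 1"
  and eta_nonneg: "i \<in> states \<Longrightarrow> 0 \<le> eta S n i"
  and eta_sum: "(\<Sum>i\<in>states. eta S n i) = 1"
  using valid user unfolding valid_system_def by auto

lemma carry_weight_nonneg: "0 \<le> carry_weight S n t"
  using p_tp_nonneg by (simp add: carry_weight_def)

lemma reward_cap_nonneg: "0 \<le> reward_cap S n t"
  using p_tp_nonneg beta_nonneg by (simp add: reward_cap_def)

lemma carry_weight_mult_le_reward_cap:
  assumes "W \<le> reward_cap S n t"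
  shows "carry_weight S n (Suc t) * W \<le> reward_cap S n (Suc t)"
  using assms p_tp_nonneg mult_left_mono[of W "beta S n" "p_tp S n"]
  by (auto simp: carry_weight_def reward_cap_def)

lemma bellman_mono_continuation:
  assumes "z \<le> 1" "W \<le> W'"
  shows "bellman S n lam e z t W \<le> bellman S n lam e z t W'"
proof -
  have "(1 - z) * (carry_weight S n t * W) \<le> (1 - z) * (carry_weight S n t * W')"
    using assms carry_weight_nonneg by (intro mult_left_mono) auto
  then show ?thesis by (simp add: bellman_def algebra_simps)
qed

lemma bellman_le_reward_cap:
  assumes "0 \<le> z" "z \<le> 1" "e \<in> energies S" "carry_weight S n t * W \<le> reward_cap S n t"
  shows "bellman S n lam e z t W \<le> reward_cap S n t"
proof -
  have "(1 - z) * (carry_weight S n t * W) \<le> (1 - z) * reward_cap S n t"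
    using assms by (intro mult_left_mono) auto
  moreover have "0 \<le> lam * e" using price_nonneg energy_nonneg[OF assms(3)] by simp
  ultimately show ?thesis by (simp add: bellman_def algebra_simps)
qed

lemma stationary_value_le_reward_cap:
  assumes "e \<in> energies S" "0 \<le> z" "z \<le> 1"
  shows "stationary_value S n lam e z t \<le> reward_cap S n t"
proof (induction t)
  case 0
  then show ?case using reward_cap_nonneg by simp
next
  case (Suc t)
  then show ?case
    using assms carry_weight_mult_le_reward_cap by (simp add: bellman_le_reward_cap)
qed

lemma expected_next_ge:
  "i \<in> states \<Longrightarrow> (\<And>j. j \<in> states \<Longrightarrow> c \<le> VI S n lam t j) \<Longrightarrow> c \<le> expected_next i t"
  using trans_sum trans_nonneg by (intro convex_combination_ge) auto

lemma expected_next_le: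
  "i \<in> states \<Longrightarrow> (\<And>j. j \<in> states \<Longrightarrow> VI S n lam t j \<le> c) \<Longrightarrow> expected_next i t \<le> c"
  using trans_sum trans_nonneg by (intro convex_combination_le) auto

lemma VI_le_reward_cap: "i \<in> states \<Longrightarrow> VI S n lam t i \<le> reward_cap S n t"
proof (induction t arbitrary: i)
  case 0
  then show ?case using reward_cap_nonneg by simp
next
  case (Suc t)
  have "carry_weight S n (Suc t) * expected_next i t \<le> reward_cap S n (Suc t)"
    using Suc by (intro carry_weight_mult_le_reward_cap expected_next_le)
  then show ?case
    unfolding VI_Suc_bellman using Suc.prems zero_energy energies_finite
    by (intro Max_image_leI bellman_le_reward_cap) (auto simp: zeta_bounds)
qed

text \<open>The worst channel state is dominated by every state, so the stationary policy evaluated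
  in it bounds the optimal value from below.\<close>

lemma stationary_value_le_VI:
  assumes "e \<in> energies S"
  shows "i \<in> states \<Longrightarrow> stationary_value S n lam e (zeta S n (i_min S n) e) t \<le> VI S n lam t i"
proof (induction t arbitrary: i)
  case 0
  then show ?case by simp
next
  case (Suc t)
  let ?z = "zeta S n (i_min S n) e"
  let ?W = "stationary_value S n lam e ?z t"
  have "?W \<le> reward_cap S n t"
    using assms zeta_bounds[OF i_min_state] by (intro stationary_value_le_reward_cap) auto
  then have "stationary_value S n lam e ?z (Suc t) \<le> bellman S n lam e (zeta S n i e) (Suc t) ?W"
    using assms Suc.prems zeta_between_extremes carry_weight_mult_le_reward_cap
    by (simp add: bellman_mono_success)
  also have "\<dots> \<le> bellman S n lam e (zeta S n i e) (Suc t) (expected_next i t)"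
    using assms Suc zeta_bounds by (intro bellman_mono_continuation expected_next_ge) auto
  also have "\<dots> \<le> VI S n lam (Suc t) i"
    unfolding VI_Suc_bellman using assms energies_finite by (intro le_Max_imageI) auto
  finally show ?case .
qed

lemma VI_nonneg: "i \<in> states \<Longrightarrow> 0 \<le> VI S n lam t i"
proof -
  have "stationary_value S n lam 0 0 t = 0"
    by (induction t) (simp_all add: bellman_def)
  then show "i \<in> states \<Longrightarrow> 0 \<le> VI S n lam t i"
    using stationary_value_le_VI[OF zero_energy] zeta_zero[OF i_min_state] by metis
qed

lemma VI_Suc_ge_idle:
  assumes "i \<in> states"
  shows "carry_weight S n (Suc t) * expected_next i t \<le> VI S n lam (Suc t) i"
proof -
  have "carry_weight S n (Suc t) * expected_next i t
      = bellman S n lam 0 (zeta S n i 0) (Suc t) (expected_next i t)"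
    using zeta_zero[OF assms] by (simp add: bellman_def)
  also have "\<dots> \<le> VI S n lam (Suc t) i"
    unfolding VI_Suc_bellman using zero_energy energies_finite by (intro le_Max_imageI) auto
  finally show ?thesis .
qed

lemma VI_Suc_le_optimistic:
  assumes "i \<in> states" "M \<le> carry_weight S n (Suc t) * expected_next i t"
    "M \<le> reward_cap S n (Suc t)" "carry_weight S n (Suc t) * expected_next i t \<le> U"
  shows "VI S n lam (Suc t) i \<le>
    Max ((\<lambda>e. - lam * e + zeta S n (i_max S n) e * (reward_cap S n (Suc t) - M)) ` energies S) + U"
  unfolding VI_Suc_bellman
proof (rule Max_image_le_Max_image_add)
  fix e assume "e \<in> energies S"
  then have "bellman S n lam e (zeta S n i e) (Suc t) (expected_next i t) \<le>
      - lam * e + zeta S n (i_max S n) e * (reward_cap S n (Suc t) - M)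
      + carry_weight S n (Suc t) * expected_next i t"
    using assms zeta_bounds zeta_between_extremes by (intro bellman_le_optimistic) auto
  then show "bellman S n lam e (zeta S n i e) (Suc t) (expected_next i t) \<le>
      - lam * e + zeta S n (i_max S n) e * (reward_cap S n (Suc t) - M) + U"
    using assms(4) by linarith
qed (use energies_finite zero_energy in auto)

lemma zeta_i_min_nonzero: "e \<in> positive_energies \<Longrightarrow> zeta S n (i_min S n) e \<noteq> 0"
  using zeta_pos[OF i_min_state] by fastforce

lemma Vl_eq_Max_stationary_value:
  "1 \<le> t \<Longrightarrow> t \<le> tau S n \<Longrightarrow>
     Vl S n lam t = Max ((\<lambda>e. stationary_value S n lam e (zeta S n (i_min S n) e) t) ` positive_energies)"
  unfolding Vl_def using stationary_value_before_deadline[OF zeta_i_min_nonzero]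
  by (auto simp: Let_def intro!: arg_cong[where f = Max] image_cong)

lemma tVl_deadline_eq_Max_stationary_value:
  "tVl S n lam (tau S n) =
     Max ((\<lambda>e. p_tp S n * stationary_value S n lam e (zeta S n (i_min S n) e) (tau S n)) ` positive_energies)"
  unfolding tVl_def using stationary_value_before_deadline[OF zeta_i_min_nonzero]
  by (auto simp: Let_def intro!: arg_cong[where f = Max] image_cong)

lemma tVl_after_deadline_eq_Max_stationary_value:
  "tVl S n lam (tau S n + Suc k) =
     Max ((\<lambda>e. stationary_value S n lam e (zeta S n (i_min S n) e) (tau S n + Suc k)) ` positive_energies)"
  unfolding tVl_def using stationary_value_after_deadline[OF zeta_i_min_nonzero]
  by (auto simp: Let_def intro!: arg_cong[where f = Max] image_cong)

lemma Vl_le_VI: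
  assumes "t \<le> tau S n" "j \<in> states"
  shows "Vl S n lam t \<le> VI S n lam t j"
proof (cases "t = 0")
  case False
  then have "Vl S n lam t =
      Max ((\<lambda>e. stationary_value S n lam e (zeta S n (i_min S n) e) t) ` positive_energies)"
    using assms(1) by (intro Vl_eq_Max_stationary_value) auto
  also have "\<dots> \<le> VI S n lam t j"
    using assms(2) positive_energies_finite positive_energies_nonempty stationary_value_le_VI
    by (intro Max_image_leI) auto
  finally show ?thesis .
qed (simp add: Vl_def)

lemma tVl_deadline_le_expected_next:
  assumes "i \<in> states"
  shows "tVl S n lam (tau S n) \<le> p_tp S n * expected_next i (tau S n)"
  unfolding tVl_deadline_eq_Max_stationary_value
proof (rule Max_image_leI[OF positive_energies_finite positive_energies_nonempty])
  fix e assume "e \<in> positive_energies"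
  then have "stationary_value S n lam e (zeta S n (i_min S n) e) (tau S n) \<le> expected_next i (tau S n)"
    using assms stationary_value_le_VI by (intro expected_next_ge) auto
  then show "p_tp S n * stationary_value S n lam e (zeta S n (i_min S n) e) (tau S n)
      \<le> p_tp S n * expected_next i (tau S n)"
    using p_tp_nonneg by (rule mult_left_mono)
qed

text \<open>After the deadline the user may stay idle: the value then only decays by the factor
  p of the first slot past the deadline.\<close>

lemma VI_after_deadline_ge:
  assumes "\<And>i. i \<in> states \<Longrightarrow> X \<le> p_tp S n * expected_next i (tau S n)"
  shows "j \<in> states \<Longrightarrow> X \<le> VI S n lam (tau S n + Suc k) j"
proof (induction k arbitrary: j)
  case 0
  then have "X \<le> carry_weight S n (Suc (tau S n)) * expected_next j (tau S n)"
    using assms by (simp add: carry_weight_def)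
  also have "\<dots> \<le> VI S n lam (Suc (tau S n)) j"
    using 0 by (rule VI_Suc_ge_idle)
  finally show ?case by simp
next
  case (Suc k)
  then have "X \<le> expected_next j (tau S n + Suc k)"
    by (intro expected_next_ge)
  also have "\<dots> = carry_weight S n (Suc (tau S n + Suc k)) * expected_next j (tau S n + Suc k)"
    by (simp add: carry_weight_def)
  also have "\<dots> \<le> VI S n lam (Suc (tau S n + Suc k)) j"
    using Suc.prems by (rule VI_Suc_ge_idle)
  finally show ?case by simp
qed

lemma tVl_le_VI_after_deadline:
  assumes "j \<in> states"
  shows "tVl S n lam (tau S n) \<le> VI S n lam (tau S n + Suc k) j"
    and "tVl S n lam (tau S n + Suc k) \<le> VI S n lam (tau S n + Suc k) j"
proof -
  show "tVl S n lam (tau S n) \<le> VI S n lam (tau S n + Suc k) j"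
    using assms tVl_deadline_le_expected_next by (intro VI_after_deadline_ge)
  show "tVl S n lam (tau S n + Suc k) \<le> VI S n lam (tau S n + Suc k) j"
    unfolding tVl_after_deadline_eq_Max_stationary_value
    using assms positive_energies_finite positive_energies_nonempty
    by (intro Max_image_leI stationary_value_le_VI) auto
qed

lemma tVl_lower_bound_le_VI:
  assumes "j \<in> states"
  shows "max 0 (max (tVl S n lam (tau S n)) (tVl S n lam (tau S n + Suc k)))
    \<le> VI S n lam (tau S n + Suc k) j"
  using assms VI_nonneg tVl_le_VI_after_deadline by simp

lemma tVl_lower_bound_le_success_reward:
  "max 0 (max (tVl S n lam (tau S n)) (tVl S n lam (tau S n + Suc k))) \<le> p_tp S n * beta S n"
proof -
  have "max 0 (max (tVl S n lam (tau S n)) (tVl S n lam (tau S n + Suc k)))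
      \<le> VI S n lam (tau S n + Suc k) (i_min S n)"
    using i_min_state by (rule tVl_lower_bound_le_VI)
  also have "\<dots> \<le> reward_cap S n (tau S n + Suc k)"
    using i_min_state by (rule VI_le_reward_cap)
  finally show ?thesis by (simp add: reward_cap_def)
qed

lemma VI_le_Vu: "t \<le> tau S n \<Longrightarrow> i \<in> states \<Longrightarrow> VI S n lam t i \<le> Vu S n lam t"
proof (induction t arbitrary: i)
  case 0
  then show ?case by (simp add: Vu_def)
next
  case (Suc t)
  let ?M = "max 0 (Vl S n lam t)"
  have weights: "carry_weight S n (Suc t) = 1" "reward_cap S n (Suc t) = beta S n"
    using Suc.prems by (simp_all add: carry_weight_def reward_cap_def)
  have lower: "?M \<le> VI S n lam t j" if "j \<in> states" for j
    using that Suc.prems VI_nonneg Vl_le_VI by simp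
  have "VI S n lam t (i_min S n) \<le> beta S n"
    using VI_le_reward_cap[OF i_min_state, of t] Suc.prems by (simp add: reward_cap_def)
  then have "?M \<le> beta S n"
    using lower[OF i_min_state] by linarith
  moreover have "?M \<le> expected_next i t"
    using Suc.prems lower by (intro expected_next_ge)
  moreover have "expected_next i t \<le> Vu S n lam t"
    using Suc by (intro expected_next_le) auto
  ultimately have "VI S n lam (Suc t) i \<le>
      Max ((\<lambda>e. - lam * e + zeta S n (i_max S n) e * (beta S n - ?M)) ` energies S) + Vu S n lam t"
    using VI_Suc_le_optimistic[of i ?M t "Vu S n lam t"] Suc.prems weights by simp
  also have "\<dots> = Vu S n lam (Suc t)"
    by (simp add: Vu_def)
  finally show ?case .
qed

lemma tVu_deadline: "tVu S n lam (tau S n) = p_tp S n * Vu S n lam (tau S n)"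
  by (simp add: tVu_def Vu_def)

lemma tVu_Suc:
  "tau S n \<le> t \<Longrightarrow> tVu S n lam (Suc t) = tVu S n lam t +
     Max ((\<lambda>e. - lam * e + zeta S n (i_max S n) e * (p_tp S n * beta S n
        - max 0 (max (tVl S n lam (tau S n)) (tVl S n lam t)))) ` energies S)"
  by (simp add: tVu_def)

lemma VI_Suc_le_tVu_Suc:
  fixes t :: nat and M :: real
  defines "M \<equiv> max 0 (max (tVl S n lam (tau S n)) (tVl S n lam t))"
  assumes "tau S n \<le> t" "i \<in> states"
    and "M \<le> carry_weight S n (Suc t) * expected_next i t" "M \<le> p_tp S n * beta S n"
    and "carry_weight S n (Suc t) * expected_next i t \<le> tVu S n lam t"
  shows "VI S n lam (Suc t) i \<le> tVu S n lam (Suc t)"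
proof -
  have "reward_cap S n (Suc t) = p_tp S n * beta S n"
    using assms(2) by (simp add: reward_cap_def)
  then have "VI S n lam (Suc t) i \<le>
      Max ((\<lambda>e. - lam * e + zeta S n (i_max S n) e * (p_tp S n * beta S n - M)) ` energies S)
      + tVu S n lam t"
    using VI_Suc_le_optimistic[of i M t "tVu S n lam t"] assms(3-) by simp
  then show ?thesis
    using assms(2) by (simp add: tVu_Suc M_def)
qed

lemma VI_le_tVu: "i \<in> states \<Longrightarrow> VI S n lam (tau S n + Suc k) i \<le> tVu S n lam (tau S n + Suc k)"
proof (induction k arbitrary: i)
  case 0
  have "expected_next i (tau S n) \<le> Vu S n lam (tau S n)"
    using 0 VI_le_Vu by (intro expected_next_le) auto
  then have upper: "carry_weight S n (Suc (tau S n)) * expected_next i (tau S n) \<le> tVu S n lam (tau S n)"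
    using p_tp_nonneg by (simp add: carry_weight_def tVu_deadline mult_left_mono)
  have "0 \<le> expected_next i (tau S n)"
    using 0 VI_nonneg by (intro expected_next_ge)
  then have "max 0 (max (tVl S n lam (tau S n)) (tVl S n lam (tau S n)))
      \<le> carry_weight S n (Suc (tau S n)) * expected_next i (tau S n)"
    using 0 p_tp_nonneg tVl_deadline_le_expected_next by (simp add: carry_weight_def)
  moreover have "max 0 (max (tVl S n lam (tau S n)) (tVl S n lam (tau S n))) \<le> p_tp S n * beta S n"
    using tVl_lower_bound_le_success_reward[of 0] by simp
  ultimately show ?case
    using 0 upper by (simp add: VI_Suc_le_tVu_Suc)
next
  case (Suc k)
  let ?t = "tau S n + Suc k"
  have "max 0 (max (tVl S n lam (tau S n)) (tVl S n lam ?t)) \<le> expected_next i ?t"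
    using Suc.prems tVl_lower_bound_le_VI by (intro expected_next_ge)
  moreover have "expected_next i ?t \<le> tVu S n lam ?t"
    using Suc by (intro expected_next_le)
  moreover have "carry_weight S n (Suc ?t) = 1"
    by (simp add: carry_weight_def)
  ultimately show ?case
    using Suc.prems tVl_lower_bound_le_success_reward VI_Suc_le_tVu_Suc[of ?t i] by simp
qed

lemma expected_VI_deadline_bounds:
  "max 0 (Vl S n lam (tau S n)) \<le> (\<Sum>i\<in>states. eta S n i * VI S n lam (tau S n) i)"
  "(\<Sum>i\<in>states. eta S n i * VI S n lam (tau S n) i) \<le> min (beta S n) (Vu S n lam (tau S n))"
proof -
  show "max 0 (Vl S n lam (tau S n)) \<le> (\<Sum>i\<in>states. eta S n i * VI S n lam (tau S n) i)"
    using eta_nonneg eta_sum VI_nonneg Vl_le_VI by (intro convex_combination_ge) auto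
  have "VI S n lam (tau S n) i \<le> beta S n" if "i \<in> states" for i
    using VI_le_reward_cap[OF that, of "tau S n"] by (simp add: reward_cap_def)
  then show "(\<Sum>i\<in>states. eta S n i * VI S n lam (tau S n) i) \<le> min (beta S n) (Vu S n lam (tau S n))"
    using eta_nonneg eta_sum VI_le_Vu by (intro convex_combination_le) auto
qed

lemma expected_VI_horizon_bounds:
  "max 0 (max (tVl S n lam (tau S n)) (tVl S n lam (tau S n + delay S n)))
     \<le> (\<Sum>i\<in>states. eta S n i * VI S n lam (tau S n + delay S n) i)"
  "(\<Sum>i\<in>states. eta S n i * VI S n lam (tau S n + delay S n) i)
     \<le> min (p_tp S n * beta S n) (tVu S n lam (tau S n + delay S n))"
proof -
  obtain k where k: "delay S n = Suc k"
    using delay_pos by (metis Suc_le_D One_nat_def)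
  show "max 0 (max (tVl S n lam (tau S n)) (tVl S n lam (tau S n + delay S n)))
     \<le> (\<Sum>i\<in>states. eta S n i * VI S n lam (tau S n + delay S n) i)"
    unfolding k using eta_nonneg eta_sum tVl_lower_bound_le_VI
    by (intro convex_combination_ge) auto
  have "VI S n lam (tau S n + Suc k) i \<le> p_tp S n * beta S n" if "i \<in> states" for i
    using VI_le_reward_cap[OF that, of "tau S n + Suc k"] by (simp add: reward_cap_def)
  then show "(\<Sum>i\<in>states. eta S n i * VI S n lam (tau S n + delay S n) i)
     \<le> min (p_tp S n * beta S n) (tVu S n lam (tau S n + delay S n))"
    unfolding k using eta_nonneg eta_sum VI_le_tVu by (intro convex_combination_le) auto
qed

lemma a_tilde_nonneg: "0 \<le> a_tilde S n"
  using arrival_bounds q_fn_less_p_tp by (simp add: a_tilde_def)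

lemma a_tilde_le_a_max: "a_tilde S n \<le> a_max S"
  using arrival_bounds q_fn_less_p_tp by (simp add: a_tilde_def divide_le_eq algebra_simps)

lemma imperfect_prediction_weight_nonneg: "0 \<le> (a_max S - a_tilde S n) * q_fn S n"
  using a_tilde_le_a_max q_fn_nonneg by simp

lemma imperfect_prediction_term_bounds:
  "a_tilde S n * max 0 (max (tVl S n lam (tau S n)) (tVl S n lam (tau S n + delay S n)))
     + (a_max S - a_tilde S n) * q_fn S n * max 0 (Vl S n lam (tau S n))
   \<le> a_tilde S n * (\<Sum>i\<in>states. eta S n i * VI S n lam (tau S n + delay S n) i)
     + (a_max S - a_tilde S n) * q_fn S n * (\<Sum>i\<in>states. eta S n i * VI S n lam (tau S n) i)"
  "a_tilde S n * (\<Sum>i\<in>states. eta S n i * VI S n lam (tau S n + delay S n) i)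
     + (a_max S - a_tilde S n) * q_fn S n * (\<Sum>i\<in>states. eta S n i * VI S n lam (tau S n) i)
   \<le> a_tilde S n * min (p_tp S n * beta S n) (tVu S n lam (tau S n + delay S n))
     + (a_max S - a_tilde S n) * q_fn S n * min (beta S n) (Vu S n lam (tau S n))"
  by (intro add_mono mult_left_mono expected_VI_deadline_bounds expected_VI_horizon_bounds
      a_tilde_nonneg imperfect_prediction_weight_nonneg)+

lemma no_prediction_term_bounds:
  "arrival S n * max 0 (Vl S n lam (tau S n))
     \<le> arrival S n * (\<Sum>i\<in>states. eta S n i * VI S n lam (tau S n) i)"
  "arrival S n * (\<Sum>i\<in>states. eta S n i * VI S n lam (tau S n) i)
     \<le> arrival S n * min (beta S n) (Vu S n lam (tau S n))"
  by (intro mult_left_mono expected_VI_deadline_bounds arrival_nonneg)+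

end

lemma dual_functions_sandwich:
  assumes "valid_system S" "0 \<le> lam"
  shows "gI_l S lam \<le> gI S lam \<and> gI S lam \<le> gI_u S lam"
    and "g0_l S lam \<le> g0 S lam \<and> g0 S lam \<le> g0_u S lam"
proof -
  have user: "user_at_price S n lam" if "n < num_users S" for n
    using assms that by unfold_locales
  show "gI_l S lam \<le> gI S lam \<and> gI S lam \<le> gI_u S lam"
    unfolding gI_l_def gI_def gI_u_def
    using user_at_price.imperfect_prediction_term_bounds[OF user]
    by (intro conjI add_left_mono sum_mono) simp_all
  show "g0_l S lam \<le> g0 S lam \<and> g0 S lam \<le> g0_u S lam"
    unfolding g0_l_def g0_def g0_u_def
    using user_at_price.no_prediction_term_bounds[OF user]
    by (intro conjI add_left_mono sum_mono) simp_all
qed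

theorem theorem10:
  fixes S :: system and phiI phi0 lam0 lamI :: real
  assumes "valid_system S"
    and "\<exists>lam\<ge>0. gI S lam = phiI" and "\<forall>lam\<ge>0. phiI \<le> gI S lam"
    and "\<exists>lam\<ge>0. g0 S lam = phi0" and "\<forall>lam\<ge>0. phi0 \<le> g0 S lam"
    and "lam0 \<ge> 0" and "\<forall>lam\<ge>0. g0_l S lam0 \<le> g0_l S lam"
    and "lamI \<ge> 0" and "\<forall>lam\<ge>0. gI_l S lamI \<le> gI_l S lam"
  shows "gI_l S lamI - g0_u S lamI \<le> phiI - phi0 \<and> phiI - phi0 \<le> gI_u S lam0 - g0_l S lam0"
proof (rule minimum_difference_bounds[where A = "{0..}" and f = "gI S" and f_l = "gI_l S"
      and f_u = "gI_u S" and g = "g0 S" and g_l = "g0_l S" and g_u = "g0_u S"])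
  fix lam :: real
  assume "lam \<in> {0..}"
  then show "gI_l S lam \<le> gI S lam \<and> gI S lam \<le> gI_u S lam"
    and "g0_l S lam \<le> g0 S lam \<and> g0 S lam \<le> g0_u S lam"
    using dual_functions_sandwich[OF assms(1)] by simp_all
qed (use assms in auto)

end
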